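(* If a positive-dimensional complex quasi-projective variety $X$ is pseudo Brody hyperbolic, then $X$ is not $h$-special.
   Context: $X$ is pseudo Brody hyperbolic if there is a proper Zariski closed subset $E\subsetneq X$ such that every non-constant holomorphic map $f:\mathbb{C}\to X$ satisfies $f(\mathbb{C})\subset E$. For $x,y\in X$, $x\sim y$ iff there exist holomorphic maps $f_1,\dots,f_l:\mathbb{C}\to X$ such that, with $Z_i$ the Zariski closure of $f_i(\mathbb{C})$, $x\in Z_1$, $Z_i\cap Z_{i+1}\ne\emptyset$ for $1\le i<l$, and $y\in Z_l$; $X$ is $h$-special iff $\{(x,y):x\sim y\}$ is Zariski dense in $X\times X$. *)

theory Defs
  imports "HOL-Analysis.Analysis"
begin

text \<open>Model of complex projective space P^N (N+1 = CARD('n)): a point is represented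
by its nonzero homogeneous coordinate vectors in complex^'n; subsets of P^N are
represented as cones (sets of nonzero vectors stable under nonzero scaling).\<close>

definition monomial :: "('n::finite \<Rightarrow> nat) \<Rightarrow> complex^'n \<Rightarrow> complex" where
  "monomial e x = (\<Prod>i\<in>UNIV. (x $ i) ^ e i)"

definition hom_poly :: "nat \<Rightarrow> (complex^'n::finite \<Rightarrow> complex) \<Rightarrow> bool" where
  "hom_poly d p \<longleftrightarrow> (\<exists>M :: ('n \<Rightarrow> nat) \<Rightarrow> complex.
      finite {e. M e \<noteq> 0} \<and> (\<forall>e. M e \<noteq> 0 \<longrightarrow> sum e UNIV = d) \<and>
      p = (\<lambda>x. \<Sum>e\<in>{e. M e \<noteq> 0}. M e * monomial e x))"

definition proj_closed :: "(complex^'n::finite) set \<Rightarrow> bool" where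
  "proj_closed A \<longleftrightarrow> (\<exists>F :: (nat \<times> (complex^'n \<Rightarrow> complex)) set.
      (\<forall>(d,p)\<in>F. hom_poly d p) \<and> A = {x. x \<noteq> 0 \<and> (\<forall>(d,p)\<in>F. p x = 0)})"

definition proj_closure :: "(complex^'n::finite) set \<Rightarrow> (complex^'n) set" where
  "proj_closure A = \<Inter>{C. proj_closed C \<and> A \<subseteq> C}"

definition bihom_poly :: "(complex^'n::finite \<Rightarrow> complex^'n \<Rightarrow> complex) \<Rightarrow> bool" where
  "bihom_poly p \<longleftrightarrow> (\<exists>d1 d2. \<exists>M :: (('n \<Rightarrow> nat) \<times> ('n \<Rightarrow> nat)) \<Rightarrow> complex.
      finite {ef. M ef \<noteq> 0} \<and>
      (\<forall>e f. M (e,f) \<noteq> 0 \<longrightarrow> sum e UNIV = d1 \<and> sum f UNIV = d2) \<and>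
      p = (\<lambda>x y. \<Sum>ef\<in>{ef. M ef \<noteq> 0}. M ef * monomial (fst ef) x * monomial (snd ef) y))"

definition proj2_closed :: "((complex^'n::finite) \<times> (complex^'n)) set \<Rightarrow> bool" where
  "proj2_closed A \<longleftrightarrow> (\<exists>F. (\<forall>p\<in>F. bihom_poly p) \<and>
      A = {(x,y). x \<noteq> 0 \<and> y \<noteq> 0 \<and> (\<forall>p\<in>F. p x y = 0)})"

definition proj2_closure :: "((complex^'n::finite) \<times> (complex^'n)) set \<Rightarrow> _ set" where
  "proj2_closure A = \<Inter>{C. proj2_closed C \<and> A \<subseteq> C}"

definition locally_closed_proj :: "(complex^'n::finite) set \<Rightarrow> bool" where
  "locally_closed_proj X \<longleftrightarrow> (\<exists>A B. proj_closed A \<and> proj_closed B \<and> X = A - B)"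

definition zar_irreducible :: "(complex^'n::finite) set \<Rightarrow> bool" where
  "zar_irreducible S \<longleftrightarrow> S \<noteq> {} \<and>
     (\<forall>A B. proj_closed A \<and> proj_closed B \<and> S \<subseteq> A \<union> B \<longrightarrow> S \<subseteq> A \<or> S \<subseteq> B)"

definition quasi_projective_variety :: "(complex^'n::finite) set \<Rightarrow> bool" where
  "quasi_projective_variety X \<longleftrightarrow> locally_closed_proj X \<and> zar_irreducible X"

definition closed_in_X :: "(complex^'n::finite) set \<Rightarrow> (complex^'n) set \<Rightarrow> bool" where
  "closed_in_X X E \<longleftrightarrow> (\<exists>C. proj_closed C \<and> E = X \<inter> C)"

definition positive_dimensional :: "(complex^'n::finite) set \<Rightarrow> bool" where
  "positive_dimensional X \<longleftrightarrow> (\<exists>Z0 Z1. closed_in_X X Z0 \<and> closed_in_X X Z1 \<and>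
      zar_irreducible Z0 \<and> zar_irreducible Z1 \<and> Z0 \<subset> Z1)"

text \<open>Holomorphic maps C -> X, given by a nowhere-vanishing holomorphic lift
C -> C^(N+1) (every holomorphic map C -> P^N admits such a lift).\<close>
definition holo_curve :: "(complex^'n::finite) set \<Rightarrow> (complex \<Rightarrow> complex^'n) \<Rightarrow> bool" where
  "holo_curve X g \<longleftrightarrow> (\<forall>i. (\<lambda>z. g z $ i) holomorphic_on UNIV) \<and> (\<forall>z. g z \<noteq> 0 \<and> g z \<in> X)"

definition proj_eq :: "complex^'n::finite \<Rightarrow> complex^'n \<Rightarrow> bool" where
  "proj_eq x y \<longleftrightarrow> (\<exists>c::complex. c \<noteq> 0 \<and> y = (\<chi> i. c * x $ i))"

definition nonconstant_curve :: "(complex \<Rightarrow> complex^'n::finite) \<Rightarrow> bool" where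
  "nonconstant_curve g \<longleftrightarrow> (\<exists>z w. \<not> proj_eq (g z) (g w))"

definition pseudo_brody_hyperbolic :: "(complex^'n::finite) set \<Rightarrow> bool" where
  "pseudo_brody_hyperbolic X \<longleftrightarrow> (\<exists>E. closed_in_X X E \<and> E \<noteq> X \<and>
      (\<forall>g. holo_curve X g \<and> nonconstant_curve g \<longrightarrow> range g \<subseteq> E))"

definition curve_closure :: "(complex^'n::finite) set \<Rightarrow> (complex \<Rightarrow> complex^'n) \<Rightarrow> (complex^'n) set" where
  "curve_closure X g = X \<inter> proj_closure (range g)"

definition h_rel :: "(complex^'n::finite) set \<Rightarrow> complex^'n \<Rightarrow> complex^'n \<Rightarrow> bool" where
  "h_rel X x y \<longleftrightarrow> (\<exists>l::nat. \<exists>gs :: nat \<Rightarrow> complex \<Rightarrow> complex^'n. l \<ge> 1 \<and>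
      (\<forall>i<l. holo_curve X (gs i)) \<and>
      x \<in> curve_closure X (gs 0) \<and>
      (\<forall>i. i + 1 < l \<longrightarrow> curve_closure X (gs i) \<inter> curve_closure X (gs (i+1)) \<noteq> {}) \<and>
      y \<in> curve_closure X (gs (l - 1)))"

definition h_special :: "(complex^'n::finite) set \<Rightarrow> bool" where
  "h_special X \<longleftrightarrow> (X \<times> X) \<subseteq> proj2_closure {(x,y). x \<in> X \<and> y \<in> X \<and> h_rel X x y}"

end

theory Submission imports Defs begin

text \<open>Choose a homogeneous polynomial f vanishing on the exceptional set E but not at some
point x0 of X. Every entire curve in X is either non-constant, so its Zariski closure lies in
the zero set of f, or constant, so its closure is a single point of projective space.
Following a chain of such closures one sees that x \<sim> y forces f x = 0 or x = y in projective
space. These pairs form a Zariski closed subset of projective space squared, the common zero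
set of the bihomogeneous polynomials f(x) (x_i y_j - x_j y_i). As X has at least two points,
some pair (x0, y0) in X \<times> X lies outside it, so \<sim> is not Zariski dense in X \<times> X.\<close>

definition unit_exponent :: "'n \<Rightarrow> 'n \<Rightarrow> nat" where
  "unit_exponent i = (\<lambda>k. if k = i then 1 else 0)"

lemma sum_unit_exponent: "sum (unit_exponent (i::'n::finite)) UNIV = 1"
  unfolding unit_exponent_def by (simp add: sum.delta)

lemma monomial_unit_exponent: "monomial (unit_exponent i) (x::complex^'n::finite) = x $ i"
proof -
  have "monomial (unit_exponent i) x = (\<Prod>k\<in>UNIV. if k = i then x $ k else 1)"
    unfolding monomial_def unit_exponent_def by (rule prod.cong) auto
  then show ?thesis by (simp add: prod.delta)
qed

lemma monomial_add:
  "monomial (\<lambda>k. e k + e' k) (x::complex^'n::finite) = monomial e x * monomial e' x"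
  unfolding monomial_def by (simp add: power_add prod.distrib)

lemma monomial_scale:
  "monomial e (\<chi> i. c * (x::complex^'n::finite) $ i) = c ^ sum e UNIV * monomial e x"
  unfolding monomial_def by (simp add: power_mult_distrib prod.distrib power_sum)

lemma hom_poly_scale:
  assumes "hom_poly d p"
  shows "p (\<chi> i. c * (x::complex^'n::finite) $ i) = c ^ d * p x"
proof -
  obtain M where M: "\<forall>e. M e \<noteq> 0 \<longrightarrow> sum e UNIV = d"
      "p = (\<lambda>x. \<Sum>e\<in>{e. M e \<noteq> 0}. M e * monomial e x)"
    using assms unfolding hom_poly_def by blast
  show ?thesis unfolding M(2) monomial_scale sum_distrib_left
    by (rule sum.cong) (use M(1) in auto)
qed

lemma sum_collect_coefficients:
  fixes \<iota> :: "'i \<Rightarrow> 'e" and c :: "'i \<Rightarrow> 'a::semiring_0"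
  assumes "finite I"
  obtains M where "finite {e. M e \<noteq> 0}" "{e. M e \<noteq> 0} \<subseteq> \<iota> ` I"
    "\<And>\<phi>. (\<Sum>k\<in>I. c k * \<phi> (\<iota> k)) = (\<Sum>e\<in>{e. M e \<noteq> 0}. M e * \<phi> e)"
proof
  define M where "M e = (\<Sum>k\<in>{k \<in> I. \<iota> k = e}. c k)" for e
  show sub: "{e. M e \<noteq> 0} \<subseteq> \<iota> ` I"
  proof
    fix e assume e: "e \<in> {e. M e \<noteq> 0}"
    show "e \<in> \<iota> ` I"
    proof (rule ccontr)
      assume "e \<notin> \<iota> ` I"
      then have "{k \<in> I. \<iota> k = e} = {}" by blast
      then have "M e = 0" by (simp only: M_def sum.empty)
      then show False using e by simp
    qed
  qed
  then show "finite {e. M e \<noteq> 0}"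
    using assms finite_subset by blast
  fix \<phi> :: "'e \<Rightarrow> 'a"
  have "(\<Sum>k\<in>I. c k * \<phi> (\<iota> k)) = (\<Sum>e\<in>\<iota> ` I. \<Sum>k\<in>{k \<in> I. \<iota> k = e}. c k * \<phi> (\<iota> k))"
    by (rule sum.image_gen[OF assms])
  also have "\<dots> = (\<Sum>e\<in>\<iota> ` I. M e * \<phi> e)"
    unfolding M_def sum_distrib_right by (rule sum.cong) auto
  also have "\<dots> = (\<Sum>e\<in>{e. M e \<noteq> 0}. M e * \<phi> e)"
    by (rule sum.mono_neutral_right[OF finite_imageI[OF assms] sub]) simp
  finally show "(\<Sum>k\<in>I. c k * \<phi> (\<iota> k)) = (\<Sum>e\<in>{e. M e \<noteq> 0}. M e * \<phi> e)" .
qed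

lemma hom_poly_sum_monomials:
  fixes \<iota> :: "'a \<Rightarrow> ('n::finite \<Rightarrow> nat)"
  assumes "finite I" "\<forall>k\<in>I. sum (\<iota> k) UNIV = d"
  shows "hom_poly d (\<lambda>x::complex^'n. \<Sum>k\<in>I. c k * monomial (\<iota> k) x)"
proof -
  obtain M where M: "finite {e. M e \<noteq> 0}" "{e. M e \<noteq> 0} \<subseteq> \<iota> ` I"
      "\<And>\<phi>. (\<Sum>k\<in>I. c k * \<phi> (\<iota> k)) = (\<Sum>e\<in>{e. M e \<noteq> 0}. M e * \<phi> e)"
    using sum_collect_coefficients[OF assms(1), where \<iota> = \<iota> and c = c] by blast
  have "\<forall>e. M e \<noteq> 0 \<longrightarrow> sum e UNIV = d"
    using M(2) assms(2) by blast
  moreover have "(\<lambda>x::complex^'n. \<Sum>k\<in>I. c k * monomial (\<iota> k) x)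
      = (\<lambda>x. \<Sum>e\<in>{e. M e \<noteq> 0}. M e * monomial e x)"
  proof
    fix x :: "complex^'n"
    show "(\<Sum>k\<in>I. c k * monomial (\<iota> k) x) = (\<Sum>e\<in>{e. M e \<noteq> 0}. M e * monomial e x)"
      using M(3)[of "\<lambda>e. monomial e x"] by simp
  qed
  ultimately show ?thesis
    unfolding hom_poly_def using M(1) by blast
qed

lemma bihom_poly_sum_monomials:
  fixes \<iota> :: "'a \<Rightarrow> ('n::finite \<Rightarrow> nat) \<times> ('n \<Rightarrow> nat)"
  assumes "finite I" "\<forall>k\<in>I. sum (fst (\<iota> k)) UNIV = d1 \<and> sum (snd (\<iota> k)) UNIV = d2"
  shows "bihom_poly (\<lambda>(x::complex^'n) y.
           \<Sum>k\<in>I. c k * monomial (fst (\<iota> k)) x * monomial (snd (\<iota> k)) y)"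
proof -
  obtain M where M: "finite {e. M e \<noteq> 0}" "{e. M e \<noteq> 0} \<subseteq> \<iota> ` I"
      "\<And>\<phi>. (\<Sum>k\<in>I. c k * \<phi> (\<iota> k)) = (\<Sum>e\<in>{e. M e \<noteq> 0}. M e * \<phi> e)"
    using sum_collect_coefficients[OF assms(1), where \<iota> = \<iota> and c = c] by blast
  have "\<forall>e f. M (e, f) \<noteq> 0 \<longrightarrow> sum e UNIV = d1 \<and> sum f UNIV = d2"
  proof (intro allI impI)
    fix e f assume "M (e, f) \<noteq> 0"
    then obtain k where "k \<in> I" "\<iota> k = (e, f)"
      using M(2) by fastforce
    then show "sum e UNIV = d1 \<and> sum f UNIV = d2"
      using assms(2) by (metis fst_conv snd_conv)
  qed
  moreover have "(\<lambda>(x::complex^'n) y. \<Sum>k\<in>I. c k * monomial (fst (\<iota> k)) x * monomial (snd (\<iota> k)) y)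
      = (\<lambda>x y. \<Sum>ef\<in>{ef. M ef \<noteq> 0}. M ef * monomial (fst ef) x * monomial (snd ef) y)"
  proof (intro ext)
    fix x y :: "complex^'n"
    show "(\<Sum>k\<in>I. c k * monomial (fst (\<iota> k)) x * monomial (snd (\<iota> k)) y)
        = (\<Sum>ef\<in>{ef. M ef \<noteq> 0}. M ef * monomial (fst ef) x * monomial (snd ef) y)"
      using M(3)[of "\<lambda>ef. monomial (fst ef) x * monomial (snd ef) y"] by (simp add: mult.assoc)
  qed
  ultimately show ?thesis
    unfolding bihom_poly_def using M(1) by blast
qed

lemma hom_poly_minor: "hom_poly 1 (\<lambda>x::complex^'n::finite. p$i * x$j - p$j * x$i)"
proof -
  have "hom_poly 1 (\<lambda>x::complex^'n. \<Sum>b\<in>UNIV.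
      (if b then p$i else - p$j) * monomial (unit_exponent (if b then j else i)) x)"
    by (rule hom_poly_sum_monomials) (auto simp: sum_unit_exponent)
  moreover have "(\<lambda>x::complex^'n. \<Sum>b\<in>UNIV.
      (if b then p$i else - p$j) * monomial (unit_exponent (if b then j else i)) x)
     = (\<lambda>x. p$i * x$j - p$j * x$i)"
    by (simp add: fun_eq_iff UNIV_bool monomial_unit_exponent algebra_simps)
  ultimately show ?thesis by simp
qed

lemma bihom_poly_times_minor:
  assumes "hom_poly d f"
  shows "bihom_poly (\<lambda>(x::complex^'n::finite) y. f x * (x$i * y$j - x$j * y$i))"
proof -
  obtain M where M: "finite {e. M e \<noteq> 0}" "\<forall>e. M e \<noteq> 0 \<longrightarrow> sum e UNIV = d"
      "f = (\<lambda>x. \<Sum>e\<in>{e. M e \<noteq> 0}. M e * monomial e x)"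
    using assms unfolding hom_poly_def by blast
  define S where "S = {e. M e \<noteq> 0}"
  define \<iota> where "\<iota> = (\<lambda>(e::'n \<Rightarrow> nat, b::bool).
      if b then (\<lambda>k. e k + unit_exponent i k, unit_exponent j)
      else (\<lambda>k. e k + unit_exponent j k, unit_exponent i))"
  define c where "c = (\<lambda>(e::'n \<Rightarrow> nat, b::bool). if b then M e else - M e)"
  have "bihom_poly (\<lambda>(x::complex^'n) y.
      \<Sum>k\<in>S \<times> UNIV. c k * monomial (fst (\<iota> k)) x * monomial (snd (\<iota> k)) y)"
    by (rule bihom_poly_sum_monomials[of _ _ "d + 1" 1])
      (use M(1,2) in \<open>auto simp: S_def \<iota>_def sum.distrib sum_unit_exponent\<close>)
  moreover have "(\<lambda>(x::complex^'n) y.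
      \<Sum>k\<in>S \<times> UNIV. c k * monomial (fst (\<iota> k)) x * monomial (snd (\<iota> k)) y)
     = (\<lambda>x y. f x * (x$i * y$j - x$j * y$i))"
  proof (intro ext)
    fix x y :: "complex^'n"
    have "(\<Sum>k\<in>S \<times> UNIV. c k * monomial (fst (\<iota> k)) x * monomial (snd (\<iota> k)) y)
        = (\<Sum>e\<in>S. \<Sum>b\<in>UNIV. c (e, b) * monomial (fst (\<iota> (e, b))) x * monomial (snd (\<iota> (e, b))) y)"
      by (subst sum.cartesian_product) (simp add: split_def)
    also have "\<dots> = (\<Sum>e\<in>S. M e * monomial e x * (x$i * y$j - x$j * y$i))"
      by (rule sum.cong)
        (auto simp: UNIV_bool c_def \<iota>_def monomial_add monomial_unit_exponent algebra_simps)
    also have "\<dots> = f x * (x$i * y$j - x$j * y$i)"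
      unfolding M(3) S_def sum_distrib_right by simp
    finally show "(\<Sum>k\<in>S \<times> UNIV. c k * monomial (fst (\<iota> k)) x * monomial (snd (\<iota> k)) y)
        = f x * (x$i * y$j - x$j * y$i)" .
  qed
  ultimately show ?thesis by simp
qed

lemma proj_eq_refl: "proj_eq (x::complex^'n::finite) x"
  unfolding proj_eq_def by (rule exI[of _ 1]) (simp add: vec_eq_iff)

lemma proj_eq_sym: "proj_eq (x::complex^'n::finite) y \<Longrightarrow> proj_eq y x"
  unfolding proj_eq_def
proof (elim exE conjE)
  fix c :: complex assume c: "c \<noteq> 0" "y = (\<chi> i. c * x $ i)"
  show "\<exists>c. c \<noteq> 0 \<and> x = (\<chi> i. c * y $ i)"
    by (rule exI[of _ "1 / c"]) (use c in \<open>auto simp: vec_eq_iff\<close>)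
qed

lemma proj_eq_trans: "proj_eq (x::complex^'n::finite) y \<Longrightarrow> proj_eq y z \<Longrightarrow> proj_eq x z"
  unfolding proj_eq_def
proof (elim exE conjE)
  fix c d :: complex assume c: "c \<noteq> 0" "y = (\<chi> i. c * x $ i)" "d \<noteq> 0" "z = (\<chi> i. d * y $ i)"
  show "\<exists>c. c \<noteq> 0 \<and> z = (\<chi> i. c * x $ i)"
    by (rule exI[of _ "d * c"]) (use c in \<open>auto simp: vec_eq_iff\<close>)
qed

lemma proj_eq_nonzero: "proj_eq (x::complex^'n::finite) y \<Longrightarrow> x \<noteq> 0 \<Longrightarrow> y \<noteq> 0"
  unfolding proj_eq_def by (auto simp: vec_eq_iff)

lemma proj_eq_iff_minors_vanish:
  assumes "(x::complex^'n::finite) \<noteq> 0" "y \<noteq> 0"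
  shows "proj_eq x y \<longleftrightarrow> (\<forall>i j. x$i * y$j = x$j * y$i)"
proof
  assume "proj_eq x y"
  then show "\<forall>i j. x$i * y$j = x$j * y$i"
    unfolding proj_eq_def by auto
next
  assume minors: "\<forall>i j. x$i * y$j = x$j * y$i"
  obtain k where k: "x$k \<noteq> 0"
    using assms(1) by (metis vec_eq_iff zero_index)
  define c where "c = y$k / x$k"
  have y: "y$i = c * x$i" for i
    using minors[rule_format, of i k] k unfolding c_def by (simp add: field_simps)
  have "c \<noteq> 0"
  proof
    assume "c = 0"
    then have "y = 0" using y by (simp add: vec_eq_iff)
    then show False using assms(2) by simp
  qed
  with y show "proj_eq x y"
    unfolding proj_eq_def by (auto simp: vec_eq_iff)
qed

lemma hom_poly_vanishes_proj_eq:
  assumes "hom_poly d f" "proj_eq (x::complex^'n::finite) y" "f y = 0"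
  shows "f x = 0"
proof -
  obtain c where "c \<noteq> 0" "y = (\<chi> i. c * x $ i)"
    using assms(2) unfolding proj_eq_def by blast
  with assms(3) hom_poly_scale[OF assms(1)] show ?thesis by simp
qed

lemma proj_closure_least: "proj_closed C \<Longrightarrow> A \<subseteq> C \<Longrightarrow> proj_closure A \<subseteq> C"
  unfolding proj_closure_def by blast

lemma proj2_closure_least: "proj2_closed C \<Longrightarrow> A \<subseteq> C \<Longrightarrow> proj2_closure A \<subseteq> C"
  unfolding proj2_closure_def by blast

lemma proj_closed_common_zeros:
  assumes "\<And>k. hom_poly (d k) (q k)"
  shows "proj_closed {x::complex^'n::finite. x \<noteq> 0 \<and> (\<forall>k. q k x = 0)}"
  unfolding proj_closed_def
  by (rule exI[of _ "range (\<lambda>k. (d k, q k))"]) (use assms in auto)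

lemma proj2_closed_common_zeros:
  assumes "\<And>k. bihom_poly (q k)"
  shows "proj2_closed {(x::complex^'n::finite, y). x \<noteq> 0 \<and> y \<noteq> 0 \<and> (\<forall>k. q k x y = 0)}"
  unfolding proj2_closed_def
  by (rule exI[of _ "range q"]) (use assms in auto)

lemma proj_closed_nonzero: "proj_closed C \<Longrightarrow> x \<in> C \<Longrightarrow> x \<noteq> 0"
  unfolding proj_closed_def by auto

lemma quasi_projective_variety_nonzero: "quasi_projective_variety X \<Longrightarrow> x \<in> X \<Longrightarrow> x \<noteq> 0"
  unfolding quasi_projective_variety_def locally_closed_proj_def
  using proj_closed_nonzero by blast

lemma proj_closed_separating_poly:
  assumes "proj_closed C" "x \<noteq> 0" "x \<notin> C"
  obtains d f where "hom_poly d f" "\<forall>z\<in>C. f z = 0" "f (x::complex^'n::finite) \<noteq> 0"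
proof -
  obtain F where F: "\<forall>(d, p)\<in>F. hom_poly d p" "C = {x. x \<noteq> 0 \<and> (\<forall>(d, p)\<in>F. p x = 0)}"
    using assms(1) unfolding proj_closed_def by blast
  then obtain d f where "(d, f) \<in> F" "f x \<noteq> 0"
    using assms(2,3) by blast
  with F that show ?thesis by blast
qed

lemma proj_closed_proj_eq:
  assumes "proj_closed C" "(x::complex^'n::finite) \<in> C" "proj_eq x y"
  shows "y \<in> C"
proof -
  obtain F where F: "\<forall>(d, p)\<in>F. hom_poly d p" "C = {x. x \<noteq> 0 \<and> (\<forall>(d, p)\<in>F. p x = 0)}"
    using assms(1) unfolding proj_closed_def by blast
  have "p y = 0" if "(d, p) \<in> F" for d p
  proof -
    have "hom_poly d p" "p x = 0"
      using F assms(2) that by auto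
    then show ?thesis
      using hom_poly_vanishes_proj_eq proj_eq_sym[OF assms(3)] by blast
  qed
  moreover have "y \<noteq> 0"
    using proj_eq_nonzero[OF assms(3) proj_closed_nonzero[OF assms(1,2)]] .
  ultimately show ?thesis
    using F(2) by auto
qed

lemma proj_closed_proj_point:
  assumes "(p::complex^'n::finite) \<noteq> 0"
  shows "proj_closed {x. proj_eq p x}"
proof -
  have "proj_closed {x. x \<noteq> 0 \<and> (\<forall>k. p$fst k * x$snd k - p$snd k * x$fst k = 0)}"
    by (rule proj_closed_common_zeros) (rule hom_poly_minor)
  moreover have "proj_eq p x \<longleftrightarrow> x \<noteq> 0 \<and> (\<forall>i j. p$i * x$j = p$j * x$i)" for x
    using proj_eq_iff_minors_vanish[OF assms, of x] proj_eq_nonzero[OF _ assms, of x] by blast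
  ultimately show ?thesis
    by simp
qed

lemma proj2_closed_vanishing_or_proj_eq:
  assumes "hom_poly d f"
  shows "proj2_closed {(x::complex^'n::finite, y). x \<noteq> 0 \<and> y \<noteq> 0 \<and> (f x = 0 \<or> proj_eq x y)}"
proof -
  have "proj2_closed {(x::complex^'n, y). x \<noteq> 0 \<and> y \<noteq> 0 \<and>
      (\<forall>k. f x * (x$fst k * y$snd k - x$snd k * y$fst k) = 0)}"
    by (rule proj2_closed_common_zeros) (rule bihom_poly_times_minor[OF assms])
  moreover have "{(x, y). x \<noteq> 0 \<and> y \<noteq> 0 \<and>
      (\<forall>k. f x * (x$fst k * y$snd k - x$snd k * y$fst k) = 0)}
      = {(x, y). x \<noteq> 0 \<and> y \<noteq> 0 \<and> (f x = 0 \<or> proj_eq x y)}"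
    by (auto simp: proj_eq_iff_minors_vanish)
  ultimately show ?thesis
    by simp
qed

lemma curve_closure_cases:
  assumes "holo_curve X g" "proj_closed C"
    and "\<forall>g. holo_curve X g \<and> nonconstant_curve g \<longrightarrow> range g \<subseteq> C"
  shows "curve_closure X g \<subseteq> C \<or> curve_closure X g \<subseteq> {x. proj_eq (g 0) x}"
proof (cases "nonconstant_curve g")
  case True
  then have "range g \<subseteq> C"
    using assms by blast
  then show ?thesis
    unfolding curve_closure_def using proj_closure_least assms(2) by blast
next
  case False
  then have "range g \<subseteq> {x. proj_eq (g 0) x}"
    unfolding nonconstant_curve_def by blast
  moreover have "g 0 \<noteq> 0"
    using assms(1) unfolding holo_curve_def by blast
  ultimately show ?thesis
    unfolding curve_closure_def
    using proj_closure_least[OF proj_closed_proj_point[OF \<open>g 0 \<noteq> 0\<close>]] by blast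
qed

text \<open>The property ``f x = 0 or z is the point x'' spreads from one point of the closure of
an entire curve to all of it: a non-constant curve lies in the zero set of f, where the
property forces f x = 0, and a constant one is a single point.\<close>

lemma curve_closure_propagates:
  assumes "holo_curve X g" "proj_closed C"
    and "\<forall>g. holo_curve X g \<and> nonconstant_curve g \<longrightarrow> range g \<subseteq> C"
    and "hom_poly d f" "\<forall>z\<in>C. f z = 0"
    and "w \<in> curve_closure X g" "f x = 0 \<or> proj_eq x w"
    and "z \<in> curve_closure X g"
  shows "f x = 0 \<or> proj_eq x z"
  using curve_closure_cases[OF assms(1-3)]
proof
  assume "curve_closure X g \<subseteq> C"
  then show ?thesis
    using assms(5-7) hom_poly_vanishes_proj_eq[OF assms(4)] by blast
next
  assume "curve_closure X g \<subseteq> {x. proj_eq (g 0) x}"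
  then have "proj_eq w z"
    using assms(6,8) proj_eq_sym proj_eq_trans by blast
  then show ?thesis
    using assms(7) proj_eq_trans by blast
qed

lemma h_rel_vanishing_or_proj_eq:
  assumes "h_rel X x y" "proj_closed C"
    and "\<forall>g. holo_curve X g \<and> nonconstant_curve g \<longrightarrow> range g \<subseteq> C"
    and "hom_poly d f" "\<forall>z\<in>C. f z = 0"
  shows "f x = 0 \<or> proj_eq x y"
proof -
  obtain l :: nat and gs where l: "l \<ge> 1" "\<forall>i<l. holo_curve X (gs i)" "x \<in> curve_closure X (gs 0)"
    "\<forall>i. i + 1 < l \<longrightarrow> curve_closure X (gs i) \<inter> curve_closure X (gs (i + 1)) \<noteq> {}"
    "y \<in> curve_closure X (gs (l - 1))"
    using assms(1) unfolding h_rel_def by blast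
  note propagate = curve_closure_propagates[OF _ assms(2-5)]
  have chain: "\<forall>z\<in>curve_closure X (gs k). f x = 0 \<or> proj_eq x z" if "k < l" for k
    using that
  proof (induction k)
    case 0
    then have "holo_curve X (gs 0)"
      using l(2) by blast
    then show ?case
      using propagate[OF _ l(3)] proj_eq_refl by blast
  next
    case (Suc k)
    then obtain w where w: "w \<in> curve_closure X (gs k)" "w \<in> curve_closure X (gs (Suc k))"
      using l(4) by fastforce
    have "holo_curve X (gs (Suc k))"
      using l(2) Suc.prems by blast
    moreover have "f x = 0 \<or> proj_eq x w"
      using Suc.IH Suc.prems w(1) by fastforce
    ultimately show ?case
      using propagate w(2) by blast
  qed
  have "l - 1 < l"
    using l(1) by simp
  then show ?thesis
    using chain l(5) by blast
qed

lemma positive_dimensional_other_point: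
  assumes "positive_dimensional X"
  obtains y where "y \<in> X" "\<not> proj_eq (x::complex^'n::finite) y"
proof -
  obtain Z0 Z1 where Z: "closed_in_X X Z0" "closed_in_X X Z1" "zar_irreducible Z0" "Z0 \<subset> Z1"
    using assms unfolding positive_dimensional_def by blast
  obtain C0 where C0: "proj_closed C0" "Z0 = X \<inter> C0"
    using Z(1) unfolding closed_in_X_def by blast
  obtain z0 where z0: "z0 \<in> Z0"
    using Z(3) unfolding zar_irreducible_def by blast
  obtain z1 where z1: "z1 \<in> Z1" "z1 \<notin> Z0"
    using Z(4) by blast
  have X: "z0 \<in> X" "z1 \<in> X"
    using Z(2) z0 z1(1) C0(2) unfolding closed_in_X_def by blast+
  have "\<not> proj_eq z0 z1"
    using proj_closed_proj_eq[OF C0(1)] z0 z1 X C0(2) by blast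
  then have "\<not> proj_eq x z0 \<or> \<not> proj_eq x z1"
    using proj_eq_sym proj_eq_trans by blast
  with X that show ?thesis by blast
qed

theorem lemma4p6:
  fixes X :: "(complex^'n::finite) set"
  assumes "quasi_projective_variety X"
    and "positive_dimensional X"
    and "pseudo_brody_hyperbolic X"
  shows "\<not> h_special X"
proof
  assume special: "h_special X"
  obtain C where C: "proj_closed C" "X \<inter> C \<noteq> X"
      "\<forall>g. holo_curve X g \<and> nonconstant_curve g \<longrightarrow> range g \<subseteq> C"
    using assms(3) unfolding pseudo_brody_hyperbolic_def closed_in_X_def by blast
  then obtain x0 where x0: "x0 \<in> X" "x0 \<notin> C"
    by blast
  then have "x0 \<noteq> 0"
    using quasi_projective_variety_nonzero[OF assms(1)] by blast
  then obtain d f where f: "hom_poly d f" "\<forall>z\<in>C. f z = 0" "f x0 \<noteq> 0"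
    by (rule proj_closed_separating_poly[OF C(1) _ x0(2)])
  obtain y0 where y0: "y0 \<in> X" "\<not> proj_eq x0 y0"
    by (rule positive_dimensional_other_point[OF assms(2)])
  let ?Z = "{(x, y). x \<noteq> 0 \<and> y \<noteq> 0 \<and> (f x = 0 \<or> proj_eq x y)}"
  have "{(x, y). x \<in> X \<and> y \<in> X \<and> h_rel X x y} \<subseteq> ?Z"
    using h_rel_vanishing_or_proj_eq[OF _ C(1,3) f(1,2)]
      quasi_projective_variety_nonzero[OF assms(1)] by auto
  then have "proj2_closure {(x, y). x \<in> X \<and> y \<in> X \<and> h_rel X x y} \<subseteq> ?Z"
    by (rule proj2_closure_least[OF proj2_closed_vanishing_or_proj_eq[OF f(1)]])
  with special have "(x0, y0) \<in> ?Z"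
    using x0(1) y0(1) unfolding h_special_def by blast
  then show False
    using y0(2) f(3) by simp
qed

end
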